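(* Let $n\geq 1$. For every finite frame $\mathcal{F}$ in which all theorems of $\mathrm{K4}\mathbb{C}_n$ are valid, there exist a hereditarily $(n+1)$-irresolvable T$_D$ space $X$ and a surjective $d$-morphism from $X$ onto $\mathcal{F}$.
   Context: Modal formulas use propositional variables, Boolean connectives and $\Diamond,\Box$. A normal logic is a set of formulas containing all tautologies and all instances of $\Box(\varphi\to\psi)\to(\Box\varphi\to\Box\psi)$, closed under modus ponens and $\Box$-generalisation. For $n\ge1$ and formulas $\varphi_0,\dots,\varphi_n$, let $\mathbb{P}_n(\varphi_0,\dots,\varphi_n)=\Diamond(\varphi_1\land\Diamond(\varphi_2\land\cdots\land\Diamond(\varphi_n\land\Diamond\varphi_0))\cdots)$, let $\mathbb{D}_n(\varphi_0,\dots,\varphi_n)=\bigwedge_{i<j\le n}\neg(\varphi_i\land\varphi_j)$, and $\Box^*\psi=\psi\land\Box\psi$. $\mathbb{C}_n$ is the scheme $\Box^*\mathbb{D}_n(\varphi_0,\dots,\varphi_n)\to(\Diamond\varphi_0\to\Diamond(\varphi_0\land\neg\mathbb{P}_n(\varphi_0,\dots,\varphi_n)))$. $\mathrm{K4}\mathbb{C}_n$ is the smallest normal logic containing all instances of $\Diamond\Diamond\varphi\to\Diamond\varphi$ and of $\mathbb{C}_n$. Validity in a Kripke frame $(W,R)$ is the standard relational one ($\Diamond\varphi$ true at $x$ iff $\varphi$ true at some $R$-successor of $x$). For a space $X$ and $Y\subseteq X$, $\mathrm{d}_XY$ is the set of limit points of $Y$ ($x$ such that every $O-\{x\}$, $O$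 an open neighbourhood of $x$, meets $Y$). $S$ is crowded in $X$ if $S\subseteq\mathrm{d}_XS$. $X$ is T$_D$ if $\mathrm{d}_X\{x\}$ is closed for all $x$. $X$ is $k$-resolvable if it has $k$ pairwise disjoint non-empty dense subsets, and hereditarily $k$-irresolvable if no non-empty subspace is $k$-resolvable. For a transitive frame $\mathcal{F}=(W,R)$, $W_R$ denotes $W$ with the topology whose open sets are the $R$-up-sets. A $d$-morphism from $X$ to $\mathcal{F}$ is $f:X\to W$ such that (i) $f$ is continuous and open as a map $X\to W_R$; (ii) if $w$ is $R$-reflexive then $f^{-1}\{w\}$ is crowded in $X$; (iii) if $w$ is $R$-irreflexive then $f^{-1}\{w\}\cap\mathrm{d}_Xf^{-1}\{w\}=\emptyset$. *)

theory Defs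
  imports "HOL-Analysis.Analysis"
begin

datatype fm = Var nat | Bot | Neg fm | And fm fm | Or fm fm | Imp fm fm | Box fm

definition Dia :: "fm \<Rightarrow> fm" where
  "Dia \<phi> = Neg (Box (Neg \<phi>))"

definition Top :: fm where "Top = Neg Bot"

fun peval :: "(fm \<Rightarrow> bool) \<Rightarrow> fm \<Rightarrow> bool" where
  "peval v (Var p) = v (Var p)"
| "peval v Bot = False"
| "peval v (Neg \<phi>) = (\<not> peval v \<phi>)"
| "peval v (And \<phi> \<psi>) = (peval v \<phi> \<and> peval v \<psi>)"
| "peval v (Or \<phi> \<psi>) = (peval v \<phi> \<or> peval v \<psi>)"
| "peval v (Imp \<phi> \<psi>) = (peval v \<phi> \<longrightarrow> peval v \<psi>)"
| "peval v (Box \<phi>) = v (Box \<phi>)"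

definition tautology :: "fm \<Rightarrow> bool" where
  "tautology \<phi> \<longleftrightarrow> (\<forall>v. peval v \<phi>)"

text \<open>Pc phi i k = Dia(phi i \<and> Dia(phi (i+1) \<and> ... Dia(phi (i+k-1) \<and> Dia(phi 0))...)),
  so P_n(phi 0,...,phi n) = Pc phi 1 n.\<close>

fun Pc :: "(nat \<Rightarrow> fm) \<Rightarrow> nat \<Rightarrow> nat \<Rightarrow> fm" where
  "Pc \<phi> i 0 = Dia (\<phi> 0)"
| "Pc \<phi> i (Suc k) = Dia (And (\<phi> i) (Pc \<phi> (Suc i) k))"

definition PP :: "nat \<Rightarrow> (nat \<Rightarrow> fm) \<Rightarrow> fm" where
  "PP n \<phi> = Pc \<phi> 1 n"

definition DD :: "nat \<Rightarrow> (nat \<Rightarrow> fm) \<Rightarrow> fm" where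
  "DD n \<phi> = foldr And [Neg (And (\<phi> i) (\<phi> j)). i \<leftarrow> [0..<Suc n], j \<leftarrow> [0..<Suc n], i < j] Top"

definition BoxStar :: "fm \<Rightarrow> fm" where
  "BoxStar \<psi> = And \<psi> (Box \<psi>)"

definition CC :: "nat \<Rightarrow> (nat \<Rightarrow> fm) \<Rightarrow> fm" where
  "CC n \<phi> = Imp (BoxStar (DD n \<phi>))
                 (Imp (Dia (\<phi> 0)) (Dia (And (\<phi> 0) (Neg (PP n \<phi>)))))"

inductive_set K4C :: "nat \<Rightarrow> fm set" for n :: nat where
  taut: "tautology \<phi> \<Longrightarrow> \<phi> \<in> K4C n"
| axK: "Imp (Box (Imp \<phi> \<psi>)) (Imp (Box \<phi>) (Box \<psi>)) \<in> K4C n"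
| ax4: "Imp (Dia (Dia \<phi>)) (Dia \<phi>) \<in> K4C n"
| axC: "CC n \<phi>s \<in> K4C n"
| mp: "\<phi> \<in> K4C n \<Longrightarrow> Imp \<phi> \<psi> \<in> K4C n \<Longrightarrow> \<psi> \<in> K4C n"
| nec: "\<phi> \<in> K4C n \<Longrightarrow> Box \<phi> \<in> K4C n"

fun sat :: "'w set \<Rightarrow> 'w rel \<Rightarrow> (nat \<Rightarrow> 'w set) \<Rightarrow> 'w \<Rightarrow> fm \<Rightarrow> bool" where
  "sat W R V w (Var p) = (w \<in> V p)"
| "sat W R V w Bot = False"
| "sat W R V w (Neg \<phi>) = (\<not> sat W R V w \<phi>)"
| "sat W R V w (And \<phi> \<psi>) = (sat W R V w \<phi> \<and> sat W R V w \<psi>)"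
| "sat W R V w (Or \<phi> \<psi>) = (sat W R V w \<phi> \<or> sat W R V w \<psi>)"
| "sat W R V w (Imp \<phi> \<psi>) = (sat W R V w \<phi> \<longrightarrow> sat W R V w \<psi>)"
| "sat W R V w (Box \<phi>) = (\<forall>u \<in> W. (w, u) \<in> R \<longrightarrow> sat W R V u \<phi>)"

definition frame :: "'w set \<Rightarrow> 'w rel \<Rightarrow> bool" where
  "frame W R \<longleftrightarrow> R \<subseteq> W \<times> W"

definition valid_in :: "'w set \<Rightarrow> 'w rel \<Rightarrow> fm \<Rightarrow> bool" where
  "valid_in W R \<phi> \<longleftrightarrow> (\<forall>V. \<forall>w \<in> W. sat W R V w \<phi>)"

definition crowded_in :: "'a topology \<Rightarrow> 'a set \<Rightarrow> bool" where
  "crowded_in X S \<longleftrightarrow> S \<subseteq> X derived_set_of S"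

definition T_D :: "'a topology \<Rightarrow> bool" where
  "T_D X \<longleftrightarrow> (\<forall>x \<in> topspace X. closedin X (X derived_set_of {x}))"

definition resolvable :: "nat \<Rightarrow> 'a topology \<Rightarrow> bool" where
  "resolvable k X \<longleftrightarrow>
     (\<exists>D :: nat \<Rightarrow> 'a set.
        (\<forall>i<k. D i \<noteq> {} \<and> D i \<subseteq> topspace X \<and> X closure_of (D i) = topspace X) \<and>
        (\<forall>i<k. \<forall>j<k. i \<noteq> j \<longrightarrow> D i \<inter> D j = {}))"

definition hered_irresolvable :: "nat \<Rightarrow> 'a topology \<Rightarrow> bool" where
  "hered_irresolvable k X \<longleftrightarrow>
     (\<forall>S. S \<subseteq> topspace X \<longrightarrow> S \<noteq> {} \<longrightarrow> \<not> resolvable k (subtopology X S))"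

definition up_topology :: "'w set \<Rightarrow> 'w rel \<Rightarrow> 'w topology" where
  "up_topology W R = topology (\<lambda>U. U \<subseteq> W \<and> (\<forall>x \<in> U. \<forall>y. (x, y) \<in> R \<longrightarrow> y \<in> U))"

definition d_morphism :: "'a topology \<Rightarrow> 'w set \<Rightarrow> 'w rel \<Rightarrow> ('a \<Rightarrow> 'w) \<Rightarrow> bool" where
  "d_morphism X W R f \<longleftrightarrow>
     continuous_map X (up_topology W R) f \<and>
     open_map X (up_topology W R) f \<and>
     (\<forall>w \<in> W. (w, w) \<in> R \<longrightarrow> crowded_in X {x \<in> topspace X. f x = w}) \<and>
     (\<forall>w \<in> W. (w, w) \<notin> R \<longrightarrow>
        {x \<in> topspace X. f x = w} \<inter> X derived_set_of {x \<in> topspace X. f x = w} = {})"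

end

(* Validity of the 4-axiom makes R transitive, and validity of C_n bounds every cluster of R
   by n worlds.  Fix a free ultrafilter F on the naturals and topologise W \<times> \<nat> by declaring a
   set open when, together with any (w, m), it contains (v, k) for F-many k whenever w R v.
   The projection onto W is a surjective d-morphism, and discarding finitely many indices
   from neighbourhoods makes the space T_D.  Suppose a non-empty S carries n + 1 pairwise
   disjoint dense sets.  Take x in S lying over an R-maximal world w among those met by S.
   Each of the at most n worlds of the cluster of w is F-large in at most one of the dense
   sets, so some dense set D is F-small over the whole cluster; then the basic neighbourhood
   of x minus D is open, meets S through another dense set, and yet misses D. *)

theory Submission
  imports Defs
begin

lemma ex_minimal_proper_filter_le:
  fixes G :: "'a filter"
  assumes "G \<noteq> bot"
  obtains U where "U \<le> G" "U \<noteq> bot" "\<And>H. H \<noteq> bot \<Longrightarrow> H \<le> U \<Longrightarrow> H = U"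
proof -
  let ?R = "{(H', H). H \<noteq> bot \<and> H \<le> H' \<and> H' \<le> G}"
  have field: "Field ?R = {H. H \<noteq> bot \<and> H \<le> G}"
    by (auto simp: Field_def bot_unique)
  have "\<exists>U\<in>Field ?R. \<forall>H\<in>Field ?R. (U, H) \<in> ?R \<longrightarrow> H = U"
  proof (rule Zorns_po_lemma)
    show "Partial_order ?R"
      unfolding partial_order_on_def preorder_on_def field
      by (auto simp: refl_on_def trans_def antisym_def bot_unique intro: order_trans)
    fix C assume C: "C \<in> Chains ?R"
    show "\<exists>U\<in>Field ?R. \<forall>H\<in>C. (H, U) \<in> ?R"
    proof (cases "C = {}")
      case True
      then show ?thesis using assms by (auto simp: field)
    next
      case False
      have "Inf C = bot \<longleftrightarrow> (\<exists>H\<in>C. H = bot)"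
        unfolding trivial_limit_def using False C
        by (intro eventually_Inf_base) (auto simp: Chains_def)
      then have "Inf C \<noteq> bot" using C by (auto simp: Chains_def)
      moreover from False obtain H where "H \<in> C" by auto
      with C have "Inf C \<le> G" by (auto intro!: Inf_lower2[of H] simp: Chains_def)
      ultimately show ?thesis
        using C by (auto simp: field Chains_def intro!: bexI[of _ "Inf C"] Inf_lower)
    qed
  qed
  with that show ?thesis
    unfolding field by (auto intro: order_trans)
qed

lemma ex_ultrafilter_le:
  fixes G :: "'a filter"
  assumes "G \<noteq> bot"
  obtains U where "U \<le> G" "U \<noteq> bot" "\<And>P. eventually P U \<or> eventually (\<lambda>x. \<not> P x) U"
proof -
  obtain U where U: "U \<le> G" "U \<noteq> bot" and minimal: "\<And>H. H \<noteq> bot \<Longrightarrow> H \<le> U \<Longrightarrow> H = U"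
    using ex_minimal_proper_filter_le[OF assms] by blast
  have "eventually P U \<or> eventually (\<lambda>x. \<not> P x) U" for P
  proof (rule disjCI)
    assume "\<not> eventually (\<lambda>x. \<not> P x) U"
    then have "inf U (principal {x. P x}) \<noteq> bot"
      by (simp add: trivial_limit_def eventually_inf_principal not_eventually)
    then have "inf U (principal {x. P x}) = U" by (rule minimal) simp
    moreover have "eventually P (inf U (principal {x. P x}))"
      by (simp add: eventually_inf_principal)
    ultimately show "eventually P U" by simp
  qed
  with U that show ?thesis by blast
qed

lemma resolvable_subtopologyE:
  assumes "resolvable k (subtopology X S)" "S \<subseteq> topspace X"
  obtains D where "\<And>i. i < k \<Longrightarrow> D i \<subseteq> S"
    and "\<And>i T. i < k \<Longrightarrow> openin X T \<Longrightarrow> T \<inter> S \<noteq> {} \<Longrightarrow> T \<inter> D i \<noteq> {}"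
    and "\<And>i j. i < k \<Longrightarrow> j < k \<Longrightarrow> i \<noteq> j \<Longrightarrow> D i \<inter> D j = {}"
proof -
  have top: "topspace (subtopology X S) = S"
    using assms(2) by auto
  obtain D where D: "\<And>i. i < k \<Longrightarrow> D i \<subseteq> S"
    and dense: "\<And>i. i < k \<Longrightarrow> subtopology X S closure_of D i = topspace (subtopology X S)"
    and disj: "\<And>i j. i < k \<Longrightarrow> j < k \<Longrightarrow> i \<noteq> j \<Longrightarrow> D i \<inter> D j = {}"
    using assms(1) top unfolding resolvable_def by metis
  have "T \<inter> D i \<noteq> {}" if "i < k" "openin X T" "T \<inter> S \<noteq> {}" for i T
  proof -
    have "openin (subtopology X S) (T \<inter> S)"
      using that(2) by (auto simp: openin_subtopology)
    then have "D i \<inter> (T \<inter> S) \<noteq> {}"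
      using dense[OF that(1), unfolded dense_intersects_open] that(3) by blast
    then show ?thesis by blast
  qed
  with D disj that show ?thesis by blast
qed

lemma finite_trans_has_maximal:
  assumes "finite A" "A \<noteq> {}" "trans R"
  obtains w where "w \<in> A" "\<And>v. v \<in> A \<Longrightarrow> (w, v) \<in> R \<Longrightarrow> (v, w) \<in> R"
proof -
  define above where "above x = {v \<in> A. (x, v) \<in> R \<and> (v, x) \<notin> R}" for x
  obtain w where "w \<in> A" and least: "\<And>v. v \<in> A \<Longrightarrow> card (above w) \<le> card (above v)"
    using ex_has_least_nat[of "\<lambda>x. x \<in> A" _ "\<lambda>x. card (above x)"] assms(2) by blast
  moreover have "(v, w) \<in> R" if "v \<in> A" "(w, v) \<in> R" for v
  proof (rule ccontr)
    assume "(v, w) \<notin> R"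
    have "above v \<subseteq> above w"
    proof
      fix u assume "u \<in> above v"
      then have u: "u \<in> A" "(v, u) \<in> R" "(u, v) \<notin> R" by (auto simp: above_def)
      have "(w, u) \<in> R" using transD[OF assms(3) that(2) u(2)] .
      moreover have "(u, w) \<notin> R" using transD[OF assms(3), of u w v] that(2) u(3) by blast
      ultimately show "u \<in> above w" using u(1) by (simp add: above_def)
    qed
    moreover have "v \<in> above w" "v \<notin> above v"
      using that \<open>(v, w) \<notin> R\<close> by (auto simp: above_def)
    ultimately have "above v \<subset> above w" by blast
    then have "card (above v) < card (above w)"
      using assms(1) by (intro psubset_card_mono) (auto simp: above_def)
    then show False using least[OF that(1)] by simp
  qed
  ultimately show ?thesis using that by blast
qed

lemma pigeonhole_unused_index:
  assumes "finite C" "card C < k"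
    and "\<And>v i j. v \<in> C \<Longrightarrow> i < k \<Longrightarrow> j < k \<Longrightarrow> Q v i \<Longrightarrow> Q v j \<Longrightarrow> i = j"
  obtains j where "j < k" "\<And>v. v \<in> C \<Longrightarrow> \<not> Q v j"
proof -
  have "\<exists>j<k. \<forall>v\<in>C. \<not> Q v j"
  proof (rule ccontr)
    assume "\<not> ?thesis"
    then obtain h where h: "\<And>j. j < k \<Longrightarrow> h j \<in> C \<and> Q (h j) j" by metis
    have "inj_on h {..<k}"
      by (rule inj_onI) (metis h assms(3) lessThan_iff)
    then have "card {..<k} \<le> card C"
      using h assms(1) by (intro card_inj_on_le) auto
    then show False using assms(2) by simp
  qed
  with that show ?thesis by blast
qed

lemma openin_up_topology:
  "openin (up_topology W R) A \<longleftrightarrow> A \<subseteq> W \<and> (\<forall>x\<in>A. \<forall>y. (x, y) \<in> R \<longrightarrow> y \<in> A)"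
proof -
  have "istopology (\<lambda>U. U \<subseteq> W \<and> (\<forall>x\<in>U. \<forall>y. (x, y) \<in> R \<longrightarrow> y \<in> U))"
    unfolding istopology_def by blast
  then show ?thesis unfolding up_topology_def by simp
qed

lemma topspace_up_topology: "frame W R \<Longrightarrow> topspace (up_topology W R) = W"
  unfolding topspace_def openin_up_topology frame_def by blast

lemma sat_Dia [simp]: "sat W R V w (Dia \<phi>) \<longleftrightarrow> (\<exists>u\<in>W. (w, u) \<in> R \<and> sat W R V u \<phi>)"
  by (auto simp: Dia_def)

lemma sat_Top [simp]: "sat W R V w Top"
  by (simp add: Top_def)

lemma sat_foldr_And: "sat W R V w (foldr And xs Top) \<longleftrightarrow> (\<forall>x\<in>set xs. sat W R V w x)"
  by (induction xs) auto

lemma sat_DD: "sat W R V w (DD n \<phi>) \<longleftrightarrow>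
    (\<forall>i j. i < j \<and> j \<le> n \<longrightarrow> \<not> (sat W R V w (\<phi> i) \<and> sat W R V w (\<phi> j)))"
proof -
  have "set [Neg (And (\<phi> i) (\<phi> j)). i \<leftarrow> [0..<Suc n], j \<leftarrow> [0..<Suc n], i < j]
      = {Neg (And (\<phi> i) (\<phi> j)) | i j. i < j \<and> j \<le> n}"
    by (auto simp del: upt_Suc simp add: less_Suc_eq_le) (force, force)
  then show ?thesis unfolding DD_def sat_foldr_And by fastforce
qed

lemma sat_Pc:
  assumes "\<And>a b. a \<le> n \<Longrightarrow> b \<le> n \<Longrightarrow> (c a, c b) \<in> R"
    and "\<And>a. a \<le> n \<Longrightarrow> c a \<in> W"
    and "\<And>a. a \<le> n \<Longrightarrow> sat W R V (c a) (\<phi> a)"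
    and "i + k \<le> Suc n" "\<And>a. a \<le> n \<Longrightarrow> (y, c a) \<in> R"
  shows "sat W R V y (Pc \<phi> i k)"
  using assms(4,5)
proof (induction k arbitrary: i y)
  case 0
  then show ?case using assms(2,3) by auto
next
  case (Suc k)
  then have "i \<le> n" by simp
  then have "sat W R V (c i) (Pc \<phi> (Suc i) k)"
    using Suc.IH[of "Suc i" "c i"] Suc.prems assms(1) by auto
  then show ?case using assms(2,3) Suc.prems \<open>i \<le> n\<close> by (auto intro!: bexI[of _ "c i"])
qed

lemma trans_if_valid_4:
  assumes "frame W R" and "valid_in W R (Imp (Dia (Dia (Var 0))) (Dia (Var 0)))"
  shows "trans R"
proof (rule transI)
  fix x y z assume xy: "(x, y) \<in> R" and yz: "(y, z) \<in> R"
  then have "x \<in> W" "y \<in> W" "z \<in> W" using assms(1) by (auto simp: frame_def)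
  with assms(2) have "sat W R (\<lambda>_. {z}) x (Imp (Dia (Dia (Var 0))) (Dia (Var 0)))"
    unfolding valid_in_def by blast
  then show "(x, z) \<in> R" using xy yz \<open>y \<in> W\<close> \<open>z \<in> W\<close> by auto
qed

definition cluster :: "'w rel \<Rightarrow> 'w \<Rightarrow> 'w set" where
  "cluster R w = {v. (w, v) \<in> R \<and> (v, w) \<in> R}"

text \<open>Making variable \<open>i\<close> true exactly at the \<open>i\<close>-th of \<open>n + 1\<close> points of a cluster falsifies the
  instance of \<open>C\<^sub>n\<close> with \<open>\<phi>\<^sub>i = p\<^sub>i\<close> at the first of them.\<close>

lemma card_le_if_valid_CC:
  assumes "frame W R" "trans R" "\<And>\<phi>s. valid_in W R (CC n \<phi>s)"
    and "B \<subseteq> cluster R w" "finite B"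
  shows "card B \<le> n"
proof (rule ccontr)
  assume "\<not> card B \<le> n"
  then obtain B' where "B' \<subseteq> B" "card B' = Suc n" "finite B'"
    using obtain_subset_with_card_n[of "Suc n" B] by auto
  then obtain c where c: "bij_betw c {..n} B'"
    using finite_same_card_bij[of "{..n}" B'] by auto
  have c_cluster: "c a \<in> cluster R w" if "a \<le> n" for a
    using c that \<open>B' \<subseteq> B\<close> assms(4) by (auto simp: bij_betw_def)
  then have c_W: "c a \<in> W" if "a \<le> n" for a
    using that assms(1) by (auto simp: frame_def cluster_def)
  have c_R: "(c a, c b) \<in> R" if "a \<le> n" "b \<le> n" for a b
    using c_cluster[OF that(1)] c_cluster[OF that(2)] assms(2)
    by (auto simp: cluster_def dest: transD)
  have c_inj: "a = b" if "a \<le> n" "b \<le> n" "c a = c b" for a b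
    using c that by (auto simp: bij_betw_def inj_on_def)
  define V where "V i = (if i \<le> n then {c i} else {})" for i
  have V_iff: "u \<in> V a \<longleftrightarrow> a \<le> n \<and> u = c a" for u a
    by (simp add: V_def)
  have "sat W R V u (DD n Var)" for u
    unfolding sat_DD sat.simps V_iff using c_inj by (metis order.strict_iff_not)
  then have "sat W R V (c 0) (BoxStar (DD n Var))"
    unfolding BoxStar_def by simp
  moreover have "sat W R V (c 0) (Dia (Var 0))"
    using c_R[of 0 0] c_W[of 0] by (auto simp: V_iff)
  moreover have "sat W R V (c 0) (CC n Var)"
    using assms(3) c_W[of 0] unfolding valid_in_def by blast
  ultimately obtain u where "u \<in> W" "sat W R V u (Var 0)" "\<not> sat W R V u (PP n Var)"
    unfolding CC_def by auto
  moreover have "sat W R V (c 0) (PP n Var)"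
    unfolding PP_def by (rule sat_Pc[where c = c]) (use c_R c_W in \<open>auto simp: V_iff\<close>)
  ultimately show False by (simp add: V_iff)
qed

text \<open>The space is W \<times> \<nat>, carried by an arbitrary type through the injection \<open>e\<close>, because the
  theorem fixes the carrier type \<open>nat set set\<close>.\<close>

locale ultrafilter_space =
  fixes W :: "'w set" and R :: "'w rel" and F :: "nat filter" and e :: "'w \<times> nat \<Rightarrow> 'a"
  assumes frame: "frame W R"
    and trans_R: "trans R"
    and F_proper: "F \<noteq> bot"
    and F_free: "F \<le> cofinite"
    and F_ultra: "eventually P F \<or> eventually (\<lambda>k. \<not> P k) F"
    and e_inj: "inj_on e (W \<times> UNIV)"
begin

definition points :: "'a set" where
  "points = e ` (W \<times> UNIV)"

definition label :: "'a \<Rightarrow> 'w" where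
  "label p = fst (inv_into (W \<times> UNIV) e p)"

definition index :: "'a \<Rightarrow> nat" where
  "index p = snd (inv_into (W \<times> UNIV) e p)"

lemma R_in_W: "(v, u) \<in> R \<Longrightarrow> v \<in> W \<and> u \<in> W"
  using frame by (auto simp: frame_def)

lemma label_e [simp]: "v \<in> W \<Longrightarrow> label (e (v, k)) = v"
  and index_e [simp]: "v \<in> W \<Longrightarrow> index (e (v, k)) = k"
  using inv_into_f_f[OF e_inj, of "(v, k)"] by (simp_all add: label_def index_def)

lemma e_in_points [simp]: "v \<in> W \<Longrightarrow> e (v, k) \<in> points"
  by (simp add: points_def)

lemma points_cases:
  assumes "p \<in> points"
  obtains "label p \<in> W" "p = e (label p, index p)"
  using assms by (auto simp: points_def)

definition is_open :: "'a set \<Rightarrow> bool" where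
  "is_open Q \<longleftrightarrow> Q \<subseteq> points \<and>
     (\<forall>p\<in>Q. \<forall>v. (label p, v) \<in> R \<longrightarrow> (\<forall>\<^sub>F k in F. e (v, k) \<in> Q))"

lemma istopology_is_open: "istopology is_open"
  unfolding istopology_def
proof safe
  fix Q Q' assume "is_open Q" "is_open Q'"
  then show "is_open (Q \<inter> Q')"
    unfolding is_open_def by (auto intro: eventually_conj)
next
  fix \<Q> assume "\<forall>Q\<in>\<Q>. is_open Q"
  then show "is_open (\<Union>\<Q>)"
    unfolding is_open_def by (fastforce elim: eventually_mono)
qed

definition ultra_topology :: "'a topology" where
  "ultra_topology = topology is_open"

lemma openin_ultra_topology [simp]: "openin ultra_topology = is_open"
  by (simp add: ultra_topology_def istopology_is_open)

lemma is_open_points: "is_open points"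
  unfolding is_open_def using R_in_W by auto

lemma topspace_ultra_topology [simp]: "topspace ultra_topology = points"
  using is_open_points by (auto simp: topspace_def is_open_def)

lemma eventually_not_in_finite: "finite B \<Longrightarrow> \<forall>\<^sub>F k in F. k \<notin> B"
  using F_free by (auto simp: le_filter_def eventually_cofinite)

lemma is_open_preimage:
  assumes "A \<subseteq> W" "\<And>x y. x \<in> A \<Longrightarrow> (x, y) \<in> R \<Longrightarrow> y \<in> A"
  shows "is_open {p \<in> points. label p \<in> A}"
  unfolding is_open_def using assms R_in_W by auto

definition nbhd :: "'a \<Rightarrow> nat set \<Rightarrow> 'a set" where
  "nbhd p B = insert p (e ` (R `` {label p} \<times> - B))"

lemma is_open_nbhd:
  assumes "p \<in> points" "finite B"
  shows "is_open (nbhd p B)"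
  unfolding is_open_def
proof safe
  show "q \<in> nbhd p B \<Longrightarrow> q \<in> points" for q
    using assms(1) R_in_W by (auto simp: nbhd_def)
next
  fix q v assume q: "q \<in> nbhd p B" and "(label q, v) \<in> R"
  then have "(label p, v) \<in> R"
    using R_in_W trans_R by (auto simp: nbhd_def dest: transD)
  then show "\<forall>\<^sub>F k in F. e (v, k) \<in> nbhd p B"
    using eventually_not_in_finite[OF assms(2)] by (auto simp: nbhd_def elim: eventually_mono)
qed

lemma in_nbhd: "p \<in> nbhd p B"
  by (simp add: nbhd_def)

lemma is_open_diff:
  assumes "is_open Q"
    and "\<And>p v. p \<in> Q - D \<Longrightarrow> (label p, v) \<in> R \<Longrightarrow> \<forall>\<^sub>F k in F. e (v, k) \<notin> D"
  shows "is_open (Q - D)"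
  using assms unfolding is_open_def by (auto intro: eventually_conj)

lemma continuous_map_label: "continuous_map ultra_topology (up_topology W R) label"
  unfolding continuous_map_def topspace_ultra_topology topspace_up_topology[OF frame]
proof safe
  show "p \<in> points \<Longrightarrow> label p \<in> W" for p
    by (auto elim: points_cases)
next
  fix A assume "openin (up_topology W R) A"
  then have "is_open {p \<in> points. label p \<in> A}"
    by (intro is_open_preimage) (auto simp: openin_up_topology)
  then show "openin ultra_topology {p \<in> points. label p \<in> A}" by simp
qed

lemma open_map_label: "open_map ultra_topology (up_topology W R) label"
  unfolding open_map_def openin_ultra_topology openin_up_topology
proof safe
  fix Q p assume "is_open Q" "p \<in> Q"
  then show "label p \<in> W"
    by (auto simp: is_open_def elim: points_cases)
next
  fix Q p v assume "is_open Q" "p \<in> Q" "(label p, v) \<in> R"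
  then have "\<forall>\<^sub>F k in F. e (v, k) \<in> Q" by (auto simp: is_open_def)
  then obtain k where "e (v, k) \<in> Q" using eventually_happens' F_proper by blast
  moreover have "v \<in> W" using \<open>(label p, v) \<in> R\<close> R_in_W by blast
  ultimately show "v \<in> label ` Q" by (metis image_eqI label_e)
qed

lemma crowded_fibre:
  assumes "(w, w) \<in> R"
  shows "crowded_in ultra_topology {p \<in> topspace ultra_topology. label p = w}"
  unfolding crowded_in_def derived_set_of_def topspace_ultra_topology openin_ultra_topology
proof safe
  fix p T assume p: "p \<in> points" "w = label p" and "p \<in> T" "is_open T"
  then have "\<forall>\<^sub>F k in F. e (w, k) \<in> T \<and> k \<notin> {index p}"
    using assms eventually_not_in_finite[of "{index p}"]
    by (auto simp: is_open_def intro: eventually_conj)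
  then obtain k where "e (w, k) \<in> T" "k \<noteq> index p"
    using eventually_happens' F_proper by blast
  moreover have "w \<in> W" using assms R_in_W by blast
  ultimately show "\<exists>q. q \<noteq> p \<and> q \<in> {q \<in> points. label q = label p} \<and> q \<in> T"
    using p by (metis (mono_tags, lifting) index_e label_e e_in_points mem_Collect_eq)
qed

lemma fibre_discrete:
  assumes "(w, w) \<notin> R"
  shows "{p \<in> topspace ultra_topology. label p = w} \<inter>
    ultra_topology derived_set_of {p \<in> topspace ultra_topology. label p = w} = {}"
  unfolding derived_set_of_def topspace_ultra_topology openin_ultra_topology
proof safe
  fix p assume p: "p \<in> points" "w = label p"
    and "\<forall>T. p \<in> T \<and> is_open T \<longrightarrow> (\<exists>q. q \<noteq> p \<and> q \<in> {q \<in> points. label q = label p} \<and> q \<in> T)"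
  then obtain q where "q \<noteq> p" "label q = label p" "q \<in> nbhd p {}"
    using is_open_nbhd[OF p(1)] in_nbhd by blast
  then have "(label p, label p) \<in> R"
    using R_in_W by (auto simp: nbhd_def)
  with assms p(2) show "p \<in> {}" by simp
qed

lemma derived_set_of_singleton: "ultra_topology derived_set_of {x} = {}"
  unfolding derived_set_of_def topspace_ultra_topology openin_ultra_topology
proof safe
  fix p assume "p \<in> points" and
    "\<forall>T. p \<in> T \<and> is_open T \<longrightarrow> (\<exists>q. q \<noteq> p \<and> q \<in> {x} \<and> q \<in> T)"
  then have "x \<noteq> p" "x \<in> nbhd p {index x}"
    using is_open_nbhd[of p "{index x}"] in_nbhd by blast+
  then show "p \<in> {}"
    using R_in_W by (auto simp: nbhd_def)
qed

lemma label_image: "label ` topspace ultra_topology = W"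
proof -
  have "v \<in> label ` points" if "v \<in> W" for v
    using that by (metis e_in_points image_eqI label_e)
  then show ?thesis by (auto elim: points_cases)
qed

lemma d_morphism_label: "d_morphism ultra_topology W R label"
  unfolding d_morphism_def
  using continuous_map_label open_map_label crowded_fibre fibre_discrete by blast

lemma T_D_ultra_topology: "T_D ultra_topology"
  unfolding T_D_def by (simp add: derived_set_of_singleton)

lemma is_open_nbhd_diff:
  assumes "x \<in> points" "\<And>v. (label x, v) \<in> R \<Longrightarrow> \<forall>\<^sub>F k in F. e (v, k) \<notin> D"
  shows "is_open (nbhd x {} - D)"
proof (rule is_open_diff[OF is_open_nbhd[OF assms(1) finite.emptyI]])
  fix p v assume "p \<in> nbhd x {} - D" "(label p, v) \<in> R"
  then have "(label x, v) \<in> R"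
    using R_in_W trans_R by (auto simp: nbhd_def dest: transD)
  then show "\<forall>\<^sub>F k in F. e (v, k) \<notin> D" by (rule assms(2))
qed

lemma ex_index_not_large:
  assumes "finite C" "card C < k"
    and disj: "\<And>i j. i < k \<Longrightarrow> j < k \<Longrightarrow> i \<noteq> j \<Longrightarrow> D i \<inter> D j = {}"
  obtains j where "j < k" "\<And>v. v \<in> C \<Longrightarrow> \<not> (\<forall>\<^sub>F m in F. e (v, m) \<in> D j)"
proof -
  have unique: "i = i'"
    if "i < k" "i' < k" "\<forall>\<^sub>F m in F. e (v, m) \<in> D i" "\<forall>\<^sub>F m in F. e (v, m) \<in> D i'" for v i i'
  proof (rule ccontr)
    assume "i \<noteq> i'"
    have "\<forall>\<^sub>F m in F. False"
      by (rule eventually_mono[OF eventually_conj[OF that(3,4)]])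
        (use disj[of i i'] that(1,2) \<open>i \<noteq> i'\<close> in blast)
    with F_proper show False by simp
  qed
  show ?thesis
    using pigeonhole_unused_index[OF assms(1,2), of "\<lambda>v j. \<forall>\<^sub>F m in F. e (v, m) \<in> D j"]
      unique that by blast
qed

lemma no_disjoint_dense_family:
  assumes "finite W" "1 < k" "\<And>w. card (cluster R w) < k"
    and "S \<subseteq> points" "S \<noteq> {}"
    and D_sub: "\<And>i. i < k \<Longrightarrow> D i \<subseteq> S"
    and dense: "\<And>i T. i < k \<Longrightarrow> is_open T \<Longrightarrow> T \<inter> S \<noteq> {} \<Longrightarrow> T \<inter> D i \<noteq> {}"
    and disj: "\<And>i j. i < k \<Longrightarrow> j < k \<Longrightarrow> i \<noteq> j \<Longrightarrow> D i \<inter> D j = {}"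
  shows False
proof -
  have "label ` S \<subseteq> W" using assms(4) by (auto elim: points_cases)
  then obtain w where "w \<in> label ` S"
    and w_max: "\<And>v. v \<in> label ` S \<Longrightarrow> (w, v) \<in> R \<Longrightarrow> (v, w) \<in> R"
    using finite_trans_has_maximal[of "label ` S" R] finite_subset assms(1,5) trans_R by blast
  then obtain x where x: "x \<in> S" "label x = w" by blast
  have "finite (cluster R w)"
    using assms(1) R_in_W by (auto simp: cluster_def intro: finite_subset)
  then obtain j where j: "j < k"
    and not_large: "\<And>v. v \<in> cluster R w \<Longrightarrow> \<not> (\<forall>\<^sub>F m in F. e (v, m) \<in> D j)"
    using ex_index_not_large[where D = D, OF _ assms(3) disj] by blast
  have "\<forall>\<^sub>F m in F. e (v, m) \<notin> D j" if "(w, v) \<in> R" for v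
  proof (cases "(v, w) \<in> R")
    case True
    then show ?thesis
      using not_large[of v] that F_ultra[of "\<lambda>m. e (v, m) \<in> D j"] by (auto simp: cluster_def)
  next
    case False
    then have "v \<notin> label ` S" using w_max that by blast
    moreover have "v \<in> W" using that R_in_W by blast
    ultimately have "e (v, m) \<notin> D j" for m
      using D_sub[OF j] by (metis image_eqI label_e subsetD)
    then show ?thesis by simp
  qed
  then have open_T: "is_open (nbhd x {} - D j)"
    using x assms(4) by (intro is_open_nbhd_diff) auto
  obtain j' where j': "j' < k" "j' \<noteq> j"
    using assms(2) by (intro that[of "if j = 0 then 1 else 0"]) auto
  have "nbhd x {} \<inter> D j' \<noteq> {}"
    using dense[OF j'(1) is_open_nbhd] x assms(4) in_nbhd by blast
  then obtain y where "y \<in> nbhd x {} - D j" "y \<in> S"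
    using disj[OF j j'(1)] D_sub[OF j'(1)] j'(2) by blast
  then show False
    using dense[OF j open_T] by blast
qed

lemma hered_irresolvable_ultra_topology:
  assumes "finite W" "1 < k" "\<And>w. card (cluster R w) < k"
  shows "hered_irresolvable k ultra_topology"
  unfolding hered_irresolvable_def
proof (intro allI impI notI)
  fix S assume S: "S \<subseteq> topspace ultra_topology" "S \<noteq> {}"
    and res: "resolvable k (subtopology ultra_topology S)"
  obtain D where "\<And>i. i < k \<Longrightarrow> D i \<subseteq> S"
    and "\<And>i T. i < k \<Longrightarrow> openin ultra_topology T \<Longrightarrow> T \<inter> S \<noteq> {} \<Longrightarrow> T \<inter> D i \<noteq> {}"
    and "\<And>i j. i < k \<Longrightarrow> j < k \<Longrightarrow> i \<noteq> j \<Longrightarrow> D i \<inter> D j = {}"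
    using resolvable_subtopologyE[OF res S(1)] by blast
  with assms S show False
    by (intro no_disjoint_dense_family[of k S D]) auto
qed

end

theorem theorem5:
  fixes n :: nat and W :: "'w set" and R :: "'w rel"
  assumes "n \<ge> 1"
    and "finite W" and "frame W R"
    and "\<forall>\<phi> \<in> K4C n. valid_in W R \<phi>"
  shows "\<exists>(X :: nat set set topology) (f :: nat set set \<Rightarrow> 'w).
           hered_irresolvable (Suc n) X \<and> T_D X \<and>
           d_morphism X W R f \<and> f ` topspace X = W"
proof -
  have trans: "trans R"
    using trans_if_valid_4[OF assms(3)] assms(4) K4C.ax4 by blast
  have cluster_le: "card (cluster R w) \<le> n" for w
    using card_le_if_valid_CC[OF assms(3) trans, of n "cluster R w" w] assms(2-4) K4C.axC
    by (auto simp: cluster_def frame_def intro: finite_subset)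
  obtain F :: "nat filter" where "F \<le> cofinite" "F \<noteq> bot"
    "\<And>P. eventually P F \<or> eventually (\<lambda>k. \<not> P k) F"
    using ex_ultrafilter_le[of cofinite] by auto
  moreover have "inj_on (\<lambda>x. {{to_nat_on (W \<times> UNIV) x}}) (W \<times> (UNIV :: nat set))"
    using inj_on_to_nat_on[of "W \<times> UNIV"] countable_finite[OF assms(2)] by (auto simp: inj_on_def)
  ultimately interpret ultrafilter_space W R F "\<lambda>x. {{to_nat_on (W \<times> UNIV) x}}"
    using assms(3) trans by unfold_locales auto
  have "hered_irresolvable (Suc n) ultra_topology"
    using assms(1,2) cluster_le
    by (intro hered_irresolvable_ultra_topology) (auto intro: le_imp_less_Suc)
  then show ?thesis
    using T_D_ultra_topology d_morphism_label label_image by blast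
qed

end
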